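(* Let $\phi$ be a singular-expansive flow of a compact metric space $X$. Then: (1) the set of periodic orbits of $\phi$ is countable; (2) if $Sing(\phi)=\emptyset$ or $Sing(\phi)$ consists of finitely many isolated points of $X$, then $\phi$ is expansive; (3) if $Sing(\phi)$ is dynamically isolated, then for every $t>0$ the set of periodic orbits of $\phi$ with period in $(0,t]$ is finite.
   Context: A flow is a continuous $\phi:\mathbb{R}\times X\to X$, $\phi_t(x)=\phi(t,x)$, $\phi_0=\mathrm{id}$, $\phi_{t+s}=\phi_t\circ\phi_s$; $\phi_I(x)=\{\phi_t(x):t\in I\}$. $Sing(\phi)=\{\sigma:\phi_t(\sigma)=\sigma\ \forall t\}$; $dist(z,A)=\inf_{a\in A}d(z,a)$, with $dist(z,\emptyset)=diam(X)$. A point $x\notin Sing(\phi)$ is periodic if $\phi_t(x)=x$ for some $t>0$; the least such $t$ is its period. A compact invariant set $K$ ($\phi_t(K)=K$ for all $t$) is dynamically isolated if there is a neighborhood $U$ of $K$ with $K=\bigcap_{t\in\mathbb{R}}\phi_t(U)$. $\phi$ is singular-expansive (on $X$) if for every $\epsilon>0$ there is $\delta>0$ such that whenever $x,y\in X$ and an increasing homeomorphism $s:\mathbb{R}\to\mathbb{R}$ satisfy $d(\phi_t(x),\phi_{s(t)}(y))\le\delta\,dist(\phi_t(x),Sing(\phi))$ for all $t$, then $\phi_{s(t_0)}(y)\in\phi_{[t_0-\epsilon,t_0+\epsilon]}(x)$ for some $t_0$. $\phi$ is expansive on $\Lambda\subset X$ (Bowen–Walters) if for every $\epsilon>0$ there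 is $\delta>0$ such that whenever $x,y\in\Lambda$ and a continuous $s:\mathbb{R}\to\mathbb{R}$ with $s(0)=0$ satisfy $d(\phi_t(x),\phi_{s(t)}(y))\le\delta$ for all $t$, then $y\in\phi_{[-\epsilon,\epsilon]}(x)$; expansive means expansive on $X$. *)

theory Defs
  imports "HOL-Analysis.Analysis"
begin

text \<open>Flows on a metric space X (taken to be the whole type 'a).\<close>

definition is_flow :: "(real \<Rightarrow> 'a::metric_space \<Rightarrow> 'a) \<Rightarrow> bool" where
  "is_flow \<phi> \<longleftrightarrow> continuous_on UNIV (\<lambda>(t, x). \<phi> t x)
     \<and> \<phi> 0 = id \<and> (\<forall>t s. \<phi> (t + s) = \<phi> t \<circ> \<phi> s)"

definition flow_seg :: "(real \<Rightarrow> 'a \<Rightarrow> 'a) \<Rightarrow> real set \<Rightarrow> 'a \<Rightarrow> 'a set" where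
  "flow_seg \<phi> I x = (\<lambda>t. \<phi> t x) ` I"

definition orbit :: "(real \<Rightarrow> 'a \<Rightarrow> 'a) \<Rightarrow> 'a \<Rightarrow> 'a set" where
  "orbit \<phi> x = flow_seg \<phi> UNIV x"

definition Sing :: "(real \<Rightarrow> 'a \<Rightarrow> 'a) \<Rightarrow> 'a set" where
  "Sing \<phi> = {\<sigma>. \<forall>t. \<phi> t \<sigma> = \<sigma>}"

definition sdist :: "'a::metric_space \<Rightarrow> 'a set \<Rightarrow> real" where
  "sdist z A = (if A = {} then diameter (UNIV :: 'a set) else infdist z A)"

definition periodic_pt :: "(real \<Rightarrow> 'a \<Rightarrow> 'a) \<Rightarrow> 'a \<Rightarrow> bool" where
  "periodic_pt \<phi> x \<longleftrightarrow> x \<notin> Sing \<phi> \<and> (\<exists>t>0. \<phi> t x = x)"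

definition period :: "(real \<Rightarrow> 'a \<Rightarrow> 'a) \<Rightarrow> 'a \<Rightarrow> real" where
  "period \<phi> x = Inf {t. t > 0 \<and> \<phi> t x = x}"

definition periodic_orbits :: "(real \<Rightarrow> 'a \<Rightarrow> 'a) \<Rightarrow> 'a set set" where
  "periodic_orbits \<phi> = {orbit \<phi> x | x. periodic_pt \<phi> x}"

definition dyn_isolated :: "(real \<Rightarrow> 'a::metric_space \<Rightarrow> 'a) \<Rightarrow> 'a set \<Rightarrow> bool" where
  "dyn_isolated \<phi> K \<longleftrightarrow> compact K \<and> (\<forall>t. \<phi> t ` K = K) \<and>
     (\<exists>U. (\<exists>V. open V \<and> K \<subseteq> V \<and> V \<subseteq> U) \<and> K = (\<Inter>t. \<phi> t ` U))"

definition increasing_homeo :: "(real \<Rightarrow> real) \<Rightarrow> bool" where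
  "increasing_homeo s \<longleftrightarrow> mono s \<and> (\<exists>g. homeomorphism UNIV UNIV s g)"

definition singular_expansive :: "(real \<Rightarrow> 'a::metric_space \<Rightarrow> 'a) \<Rightarrow> bool" where
  "singular_expansive \<phi> \<longleftrightarrow> (\<forall>\<epsilon>>0. \<exists>\<delta>>0. \<forall>x y s. increasing_homeo s \<and>
     (\<forall>t. dist (\<phi> t x) (\<phi> (s t) y) \<le> \<delta> * sdist (\<phi> t x) (Sing \<phi>)) \<longrightarrow>
     (\<exists>t0. \<phi> (s t0) y \<in> flow_seg \<phi> {t0 - \<epsilon> .. t0 + \<epsilon>} x))"

definition expansive_on :: "(real \<Rightarrow> 'a::metric_space \<Rightarrow> 'a) \<Rightarrow> 'a set \<Rightarrow> bool" where
  "expansive_on \<phi> \<Lambda> \<longleftrightarrow> (\<forall>\<epsilon>>0. \<exists>\<delta>>0. \<forall>x\<in>\<Lambda>. \<forall>y\<in>\<Lambda>. \<forall>s. continuous_on UNIV s \<and> s 0 = 0 \<and>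
     (\<forall>t. dist (\<phi> t x) (\<phi> (s t) y) \<le> \<delta>) \<longrightarrow> y \<in> flow_seg \<phi> {-\<epsilon> .. \<epsilon>} x)"

definition expansive :: "(real \<Rightarrow> 'a::metric_space \<Rightarrow> 'a) \<Rightarrow> bool" where
  "expansive \<phi> \<longleftrightarrow> expansive_on \<phi> UNIV"

end

theory Submission
  imports Defs
begin

text \<open>
  Parts (1) and (3) rest on a local uniqueness property: if a point \<open>y\<close> of period \<open>q \<approx> p\<close> starts
  near a regular periodic point \<open>x\<close> of period \<open>p\<close>, the linear time change \<open>t \<mapsto> (q/p) t\<close> keeps
  the two orbits uniformly close, hence close relative to the positive distance of the orbit of
  \<open>x\<close> from the singularities, and singular expansivity puts \<open>y\<close> on the orbit of \<open>x\<close>. By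
  compactness only finitely many periodic orbits of bounded period meet a compact set free of
  singularities; exhausting the regular points by such sets gives (1), and the complement of an
  isolating neighbourhood of the singular set gives (3).

  For (2) the singular set is open, so its complement \<open>K\<close> is compact and invariant, bounded away
  from the singularities and without short periods, so that the time-\<open>\<tau>\<close> maps displace every point
  of \<open>K\<close> by a definite amount. A continuous reparametrisation \<open>s\<close> keeping the orbit of \<open>y\<close>
  \<open>\<delta>\<close>-close to that of \<open>x \<in> K\<close> must therefore be almost a translation; its piecewise-linear
  interpolation is an increasing homeomorphism to which singular expansivity applies, and the same
  displacement argument shows that the resulting orbit shift is small.
\<close>

lemma continuous_abs_less_propagates:
  fixes g :: "'b::topological_space \<Rightarrow> real"
  assumes "continuous_on S g" "connected S" "a \<in> S" "\<bar>g a\<bar> < c" "\<forall>t\<in>S. \<bar>g t\<bar> \<noteq> c" "b \<in> S"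
  shows "\<bar>g b\<bar> < c"
proof (rule ccontr)
  assume not_less: "\<not> \<bar>g b\<bar> < c"
  have conn: "connected (g ` S)" using assms by (intro connected_continuous_image)
  have ga: "g a \<in> g ` S" and gb: "g b \<in> g ` S" using assms by auto
  consider "c \<le> g b" | "g b \<le> -c" using not_less by linarith
  then show False
  proof cases
    case 1
    then have "c \<in> g ` S" using connectedD_interval[OF conn ga gb, of c] assms by auto
    then show False using assms by force
  next
    case 2
    then have "-c \<in> g ` S" using connectedD_interval[OF conn gb ga, of "-c"] assms by auto
    then show False using assms by force
  qed
qed

lemma real_mod_decomp:
  fixes p t :: real
  assumes "p > 0"
  obtains k t' where "t = t' + of_int k * p" "0 \<le> t'" "t' < p"
proof (rule that[where k = "\<lfloor>t/p\<rfloor>" and t' = "t - of_int \<lfloor>t/p\<rfloor> * p"])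
  have fl: "of_int \<lfloor>t/p\<rfloor> \<le> t/p" "t/p < of_int \<lfloor>t/p\<rfloor> + 1" by linarith+
  have "of_int \<lfloor>t/p\<rfloor> * p \<le> t/p * p" by (rule mult_right_mono[OF fl(1)]) (use assms in simp)
  then show "0 \<le> t - of_int \<lfloor>t/p\<rfloor> * p" using assms by simp
  have "t/p * p < (of_int \<lfloor>t/p\<rfloor> + 1) * p" by (rule mult_strict_right_mono[OF fl(2) assms])
  then show "t - of_int \<lfloor>t/p\<rfloor> * p < p" using assms by (simp add: algebra_simps)
qed simp

lemma increasing_homeo_scale:
  fixes c :: real
  assumes "c > 0"
  shows "increasing_homeo (\<lambda>t. c * t)"
  unfolding increasing_homeo_def
proof
  show "mono (\<lambda>t. c * t)" using assms by (intro monoI mult_left_mono) auto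
  show "\<exists>g. homeomorphism UNIV UNIV (\<lambda>t. c * t) g"
    unfolding homeomorphism_def
  proof (intro exI[of _ "\<lambda>u. u / c"] conjI)
    show "range (\<lambda>t. c * t) = UNIV" by (rule surjI[of _ "\<lambda>u. u / c"]) (use assms in simp)
    show "range (\<lambda>u. u / c) = UNIV" by (rule surjI[of _ "\<lambda>u. c * u"]) (use assms in simp)
  qed (use assms in \<open>auto intro: continuous_on_mult_left continuous_on_divide continuous_on_id continuous_on_const\<close>)
qed

lemma finite_isolated_uniform_radius:
  fixes S :: "'a::metric_space set"
  assumes "finite S" "\<forall>\<sigma>\<in>S. \<sigma> isolated_in (UNIV :: 'a set)"
  shows "\<exists>r>0. \<forall>\<sigma>\<in>S. \<forall>z. dist \<sigma> z < r \<longrightarrow> z = \<sigma>"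
  using assms
proof (induction S rule: finite_induct)
  case empty
  show ?case by (intro exI[of _ 1]) simp
next
  case (insert a F)
  obtain r where r: "r > 0" "\<forall>\<sigma>\<in>F. \<forall>z. dist \<sigma> z < r \<longrightarrow> z = \<sigma>" using insert by auto
  obtain d where d: "d > 0" "\<And>z. dist a z < d \<Longrightarrow> z = a"
    using isolated_inE_dist[of a UNIV] insert.prems by (metis UNIV_I insertI1)
  show ?case using r d by (intro exI[of _ "min r d"]) auto
qed

definition lin_interp :: "(real \<Rightarrow> real) \<Rightarrow> real \<Rightarrow> real" where
  "lin_interp s t = s (of_int \<lfloor>t\<rfloor>) + (t - of_int \<lfloor>t\<rfloor>) * (s (of_int \<lfloor>t\<rfloor> + 1) - s (of_int \<lfloor>t\<rfloor>))"

lemma lin_interp_unit_interval: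
  assumes "of_int k \<le> t" "t \<le> of_int k + 1"
  shows "lin_interp s t = s (of_int k) + (t - of_int k) * (s (of_int k + 1) - s (of_int k))"
proof (cases "t = of_int k + 1")
  case True
  then have "\<lfloor>t\<rfloor> = k + 1" by simp
  then show ?thesis unfolding lin_interp_def using True by simp
next
  case False
  then have "\<lfloor>t\<rfloor> = k" using assms by (intro floor_unique) auto
  then show ?thesis unfolding lin_interp_def by simp
qed

lemma continuous_on_lin_interp: "continuous_on UNIV (lin_interp s)"
proof (rule continuous_at_imp_continuous_on, intro ballI)
  fix t :: real
  define k where "k = \<lfloor>t\<rfloor>"
  have piece: "continuous_on {of_int j .. of_int j + 1} (lin_interp s)" for j
    by (rule continuous_on_eq[of _ "\<lambda>t. s (of_int j) + (t - of_int j) * (s (of_int j + 1) - s (of_int j))"])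
       (auto intro!: continuous_on_add continuous_on_mult continuous_on_diff continuous_on_id continuous_on_const
         simp: lin_interp_unit_interval)
  have "{of_int (k-1) .. of_int (k-1) + 1} \<union> {of_int k .. of_int k + 1} = {of_int k - 1 .. of_int k + (1::real)}"
    by auto
  then have "continuous_on {of_int k - 1 .. of_int k + (1::real)} (lin_interp s)"
    using continuous_on_closed_Un[OF _ _ piece piece, of "k - 1" k] by simp
  moreover have "t \<in> interior {of_int k - 1 .. of_int k + (1::real)}" unfolding k_def by simp linarith
  ultimately show "isCont (lin_interp s) t" by (rule continuous_on_interior)
qed

locale almost_translation =
  fixes s :: "real \<Rightarrow> real" and \<tau> :: real
  assumes increment_close: "\<And>t h. \<bar>h\<bar> \<le> 1 \<Longrightarrow> \<bar>s (t + h) - s t - h\<bar> < \<tau>"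
    and tolerance: "\<tau> \<le> 1/4"
begin

lemma unit_increment_ge: "1/2 \<le> s (t + 1) - s t"
  using increment_close[of 1 t] tolerance by auto

lemma lin_interp_increment_ge_same_piece:
  assumes "of_int k \<le> a" "a \<le> b" "b \<le> of_int k + 1"
  shows "(b - a)/2 \<le> lin_interp s b - lin_interp s a"
proof -
  have "lin_interp s b - lin_interp s a = (b - a) * (s (of_int k + 1) - s (of_int k))"
    using lin_interp_unit_interval[of k a s] lin_interp_unit_interval[of k b s] assms
    by (simp add: algebra_simps)
  also have "\<dots> \<ge> (b - a) * (1/2)"
    using assms unit_increment_ge[of "of_int k"] by (intro mult_left_mono) auto
  finally show ?thesis by simp
qed

lemma lin_interp_increment_ge:
  assumes "a \<le> b"
  shows "(b - a)/2 \<le> lin_interp s b - lin_interp s a"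
proof -
  obtain n where "\<lfloor>b\<rfloor> - \<lfloor>a\<rfloor> = int n"
    using floor_mono[OF assms] by (metis diff_ge_0_iff_ge nonneg_int_cases)
  then show ?thesis
    using assms
  proof (induction n arbitrary: a)
    case 0
    then show ?case by (intro lin_interp_increment_ge_same_piece[of "\<lfloor>a\<rfloor>"]) linarith+
  next
    case (Suc n)
    define m :: real where "m = of_int (\<lfloor>a\<rfloor> + 1)"
    have "\<lfloor>b\<rfloor> - \<lfloor>m\<rfloor> = int n" "a \<le> m" "m \<le> b" unfolding m_def using Suc.prems by linarith+
    then have "(b - m)/2 \<le> lin_interp s b - lin_interp s m" using Suc.IH by blast
    moreover have "(m - a)/2 \<le> lin_interp s m - lin_interp s a"
      by (rule lin_interp_increment_ge_same_piece[of "\<lfloor>a\<rfloor>"]) (use \<open>a \<le> m\<close> in \<open>auto simp: m_def\<close>)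
    ultimately show ?case by (simp add: field_simps)
  qed
qed

lemma diff_le_twice_lin_interp_diff: "\<bar>b - a\<bar> \<le> 2 * \<bar>lin_interp s b - lin_interp s a\<bar>"
  using lin_interp_increment_ge[of a b] lin_interp_increment_ge[of b a] by (cases "a \<le> b") auto

lemma surj_lin_interp: "surj (lin_interp s)"
proof -
  have "v \<in> range (lin_interp s)" for v
  proof -
    define D where "D = 2 * \<bar>v - lin_interp s 0\<bar>"
    have "lin_interp s (-D) \<le> v" "v \<le> lin_interp s D"
      using lin_interp_increment_ge[of "-D" 0] lin_interp_increment_ge[of 0 D] unfolding D_def by auto
    then show ?thesis
      using IVT'[of "lin_interp s" "-D" v D] continuous_on_subset[OF continuous_on_lin_interp]
      unfolding D_def by fastforce
  qed
  then show ?thesis by blast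
qed

lemma increasing_homeo_lin_interp: "increasing_homeo (lin_interp s)"
  unfolding increasing_homeo_def
proof
  show "mono (lin_interp s)" by (rule monoI) (use lin_interp_increment_ge in force)
  define g where "g = inv (lin_interp s)"
  have fg: "lin_interp s (g y) = y" for y unfolding g_def using surj_lin_interp by (simp add: surj_f_inv_f)
  have inj: "inj (lin_interp s)"
  proof (rule injI)
    fix x y assume "lin_interp s x = lin_interp s y"
    then show "x = y" using diff_le_twice_lin_interp_diff[of y x] by simp
  qed
  have gf: "g (lin_interp s x) = x" for x unfolding g_def using inj by simp
  have "continuous_on UNIV g"
    unfolding continuous_on_iff
  proof (intro ballI allI impI)
    fix x e :: real assume "e > 0"
    show "\<exists>d>0. \<forall>x'\<in>UNIV. dist x' x < d \<longrightarrow> dist (g x') (g x) < e"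
    proof (intro exI[of _ "e/2"] conjI ballI impI)
      fix x' assume "dist x' x < e/2"
      moreover have "\<bar>g x' - g x\<bar> \<le> 2 * \<bar>x' - x\<bar>" using diff_le_twice_lin_interp_diff[of "g x'" "g x"] fg by simp
      ultimately show "dist (g x') (g x) < e" by (simp add: dist_real_def)
    qed (use \<open>e > 0\<close> in simp)
  qed
  then show "\<exists>g. homeomorphism UNIV UNIV (lin_interp s) g"
    unfolding homeomorphism_def using continuous_on_lin_interp surj_lin_interp
    by (intro exI[of _ g]) (auto simp: gf fg intro: range_eqI[of _ _ "lin_interp s _"] surjI[of g "lin_interp s"])
qed

lemma lin_interp_close: "\<bar>lin_interp s t - s t\<bar> < 2 * \<tau>"
proof -
  define k :: real where "k = of_int \<lfloor>t\<rfloor>"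
  define h where "h = t - k"
  have h: "0 \<le> h" "h < 1" unfolding h_def k_def by linarith+
  have "lin_interp s t - s t = h * (s (k + 1) - s k - 1) - (s (k + h) - s k - h)"
    unfolding lin_interp_def h_def k_def by (simp add: algebra_simps)
  moreover have "\<bar>s (k + h) - s k - h\<bar> < \<tau>" using increment_close h by simp
  moreover have "\<bar>h * (s (k + 1) - s k - 1)\<bar> \<le> 1 * \<tau>"
    unfolding abs_mult using h increment_close[of 1 k] by (intro mult_mono) auto
  ultimately show ?thesis by linarith
qed

end

locale compact_flow =
  fixes \<phi> :: "real \<Rightarrow> 'a::metric_space \<Rightarrow> 'a"
  assumes compact_space: "compact (UNIV :: 'a set)" and flow: "is_flow \<phi>"
begin

lemma flow_zero [simp]: "\<phi> 0 x = x"
  using flow unfolding is_flow_def by simp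

lemma flow_trans [simp]: "\<phi> t (\<phi> s x) = \<phi> (t + s) x"
  using flow unfolding is_flow_def by (metis comp_apply)

lemma flow_inverse [simp]: "\<phi> (-t) (\<phi> t x) = x" "\<phi> t (\<phi> (-t) x) = x"
  by simp_all

lemma flow_eq_imp_on_orbit: "\<phi> a y = \<phi> b x \<Longrightarrow> y = \<phi> (b - a) x"
  by (metis flow_inverse(1) flow_trans uminus_add_conv_diff)

lemma continuous_on_flow:
  assumes "continuous_on S f" "continuous_on S g"
  shows "continuous_on S (\<lambda>z. \<phi> (f z) (g z))"
proof -
  have "continuous_on UNIV (\<lambda>c. \<phi> (fst c) (snd c))"
    using flow unfolding is_flow_def by (simp add: case_prod_beta)
  then have "continuous_on S ((\<lambda>c. \<phi> (fst c) (snd c)) \<circ> (\<lambda>z. (f z, g z)))"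
    by (intro continuous_on_compose continuous_on_Pair assms) (auto elim: continuous_on_subset)
  then show ?thesis by (simp add: o_def)
qed

lemma flow_uniformly_continuous:
  assumes "e > 0"
  shows "\<exists>d>0. \<forall>a b x y. \<bar>a\<bar> \<le> T \<and> \<bar>b\<bar> \<le> T \<and> \<bar>a - b\<bar> < d \<and> dist x y < d \<longrightarrow> dist (\<phi> a x) (\<phi> b y) < e"
proof -
  have "continuous_on ({-T..T} \<times> UNIV) (\<lambda>c. \<phi> (fst c) (snd c))"
    by (intro continuous_on_flow continuous_intros)
  moreover have "compact ({-T..T} \<times> (UNIV :: 'a set))" using compact_space by (intro compact_Times) auto
  ultimately have "uniformly_continuous_on ({-T..T} \<times> (UNIV :: 'a set)) (\<lambda>c. \<phi> (fst c) (snd c))"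
    by (rule compact_uniformly_continuous)
  then obtain d where d: "d > 0" and uc: "\<And>u v. u \<in> {-T..T} \<times> UNIV \<Longrightarrow> v \<in> {-T..T} \<times> UNIV \<Longrightarrow>
      dist v u < d \<Longrightarrow> dist (\<phi> (fst v) (snd v)) (\<phi> (fst u) (snd u)) < e"
    unfolding uniformly_continuous_on_def using assms by metis
  show ?thesis
  proof (intro exI[of _ "d/2"] conjI allI impI)
    fix a b :: real and x y :: 'a assume close: "\<bar>a\<bar> \<le> T \<and> \<bar>b\<bar> \<le> T \<and> \<bar>a - b\<bar> < d/2 \<and> dist x y < d/2"
    have "dist (a, x) (b, y) \<le> dist (a, x) (b, x) + dist (b, x) (b, y)" by (rule dist_triangle)
    also have "\<dots> = \<bar>a - b\<bar> + dist x y" by (simp add: dist_Pair_Pair dist_real_def)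
    finally have "dist (a, x) (b, y) < d" using close by linarith
    then show "dist (\<phi> a x) (\<phi> b y) < e" using uc[of "(b, y)" "(a, x)"] close by (auto simp: dist_commute abs_le_iff)
  qed (use d in auto)
qed

lemma closed_Sing: "closed (Sing \<phi>)"
proof -
  have "Sing \<phi> = (\<Inter>t. {z. \<phi> t z = z})" unfolding Sing_def by auto
  moreover have "closed {z. \<phi> t z = z}" for t
    by (intro closed_Collect_eq continuous_on_flow continuous_on_const continuous_on_id)
  ultimately show ?thesis by auto
qed

lemma flow_in_Sing_iff [simp]: "\<phi> t z \<in> Sing \<phi> \<longleftrightarrow> z \<in> Sing \<phi>"
proof
  assume "\<phi> t z \<in> Sing \<phi>"
  then have "\<phi> s (\<phi> t z) = \<phi> t z" for s unfolding Sing_def by blast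
  then have "\<phi> (-t) (\<phi> s (\<phi> t z)) = z" for s by simp
  then show "z \<in> Sing \<phi>" unfolding Sing_def by (simp add: algebra_simps)
qed (simp add: Sing_def)

lemma nonsingular_moves_forward:
  assumes "z \<notin> Sing \<phi>"
  obtains T where "T > 0" "\<phi> T z \<noteq> z"
proof -
  obtain T where T: "\<phi> T z \<noteq> z" using assms unfolding Sing_def by auto
  then have "T \<noteq> 0" by auto
  moreover have "\<phi> (-T) z \<noteq> z" using T by (metis flow_inverse(2))
  ultimately show ?thesis using T that[of T] that[of "-T"] by linarith
qed

lemma orbit_flow [simp]: "orbit \<phi> (\<phi> a x) = orbit \<phi> x"
  unfolding orbit_def flow_seg_def
proof (intro set_eqI iffI)
  fix z assume "z \<in> range (\<lambda>t. \<phi> t (\<phi> a x))"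
  then show "z \<in> range (\<lambda>t. \<phi> t x)" by auto
next
  fix z assume "z \<in> range (\<lambda>t. \<phi> t x)"
  then obtain t where "z = \<phi> t x" by blast
  then have "z = \<phi> (t - a) (\<phi> a x)" by simp
  then show "z \<in> range (\<lambda>t. \<phi> t (\<phi> a x))" by blast
qed

lemma flow_int_mult_period:
  assumes "\<phi> p x = x"
  shows "\<phi> (of_int k * p) x = x"
proof -
  have nat_mult: "\<phi> (real n * p) x = x" for n
  proof (induction n)
    case (Suc n)
    have "\<phi> (real (Suc n) * p) x = \<phi> p (\<phi> (real n * p) x)" by (simp add: algebra_simps)
    then show ?case using Suc assms by simp
  qed simp
  show ?thesis
  proof (cases "k \<ge> 0")
    case True
    then obtain n where "k = int n" using nonneg_int_cases by blast
    then show ?thesis using nat_mult[of n] by simp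
  next
    case False
    then obtain n where "k = - int n" by (metis nonpos_int_cases linorder_not_le less_imp_le)
    then show ?thesis using flow_inverse(1)[of "real n * p" x] by (simp add: nat_mult)
  qed
qed

lemma flow_add_int_period:
  assumes "\<phi> p x = x"
  shows "\<phi> (t + of_int k * p) x = \<phi> t x"
  using flow_trans[of t "of_int k * p" x] flow_int_mult_period[OF assms] by simp

lemma flow_period_shift:
  assumes "\<phi> q x = x"
  shows "\<phi> q (\<phi> a x) = \<phi> a x"
  by (metis assms add.commute flow_trans)

lemma periodic_orbit_eq_segment:
  assumes "p > 0" "\<phi> p x = x"
  shows "orbit \<phi> x = (\<lambda>t. \<phi> t x) ` {0..p}"
proof
  show "orbit \<phi> x \<subseteq> (\<lambda>t. \<phi> t x) ` {0..p}"
  proof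
    fix z assume "z \<in> orbit \<phi> x"
    then obtain t where "z = \<phi> t x" unfolding orbit_def flow_seg_def by blast
    moreover obtain j t' where "t = t' + of_int j * p" "0 \<le> t'" "t' < p" using real_mod_decomp[OF assms(1)] .
    ultimately show "z \<in> (\<lambda>t. \<phi> t x) ` {0..p}" using flow_add_int_period[OF assms(2)] by auto
  qed
qed (auto simp: orbit_def flow_seg_def)

lemma rescaled_periodic_orbits_close:
  assumes x: "p > 0" "\<phi> p x = x" and "e > 0"
  obtains \<eta> where "\<eta> > 0" "\<And>y q t. dist y x < \<eta> \<Longrightarrow> \<bar>q - p\<bar> < \<eta> \<Longrightarrow> q > 0 \<Longrightarrow> \<phi> q y = y \<Longrightarrow>
      dist (\<phi> t x) (\<phi> (q/p * t) y) < e"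
proof -
  obtain k where k: "k > 0" and uc: "\<And>a b x y. \<bar>a\<bar> \<le> 2 * p \<Longrightarrow> \<bar>b\<bar> \<le> 2 * p \<Longrightarrow> \<bar>a - b\<bar> < k \<Longrightarrow>
      dist x y < k \<Longrightarrow> dist (\<phi> a x) (\<phi> b y) < e"
    using flow_uniformly_continuous[of e "2 * p"] assms(3) by auto
  have close: "dist (\<phi> t x) (\<phi> (q/p * t) y) < e"
    if y: "dist y x < min k (p/2)" "\<bar>q - p\<bar> < min k (p/2)" "q > 0" "\<phi> q y = y" for y q t
  proof -
    \<comment> \<open>both orbits are periodic, so it suffices to compare them over one period of \<open>x\<close>\<close>
    obtain j t' where j: "t = t' + of_int j * p" "0 \<le> t'" "t' < p" using real_mod_decomp[OF x(1)] .
    have x_red: "\<phi> t x = \<phi> t' x" using j(1) flow_add_int_period[OF x(2)] by simp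
    have "q/p * t = q/p * t' + of_int j * q" using j(1) x(1) by (simp add: field_simps)
    then have y_red: "\<phi> (q/p * t) y = \<phi> (q/p * t') y" using flow_add_int_period[OF y(4)] by simp
    have "t' - q/p * t' = (p - q) * (t'/p)" using x(1) by (simp add: field_simps)
    then have "\<bar>t' - q/p * t'\<bar> = \<bar>p - q\<bar> * (t'/p)" using j x(1) by (simp add: abs_mult)
    also have "\<dots> \<le> \<bar>p - q\<bar> * 1" using j x(1) by (intro mult_left_mono) auto
    finally have time_close: "\<bar>t' - q/p * t'\<bar> < k" using y(2) by (simp add: abs_minus_commute)
    have "q/p * t' \<le> q/p * p" using j x(1) y(3) by (intro mult_left_mono) auto
    moreover have "q \<le> 2 * p" using y(2) unfolding min_less_iff_conj by linarith
    moreover have "0 \<le> q/p * t'" using j x(1) y(3) by simp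
    ultimately have "\<bar>q/p * t'\<bar> \<le> 2 * p" using x(1) by simp
    then have "dist (\<phi> t' x) (\<phi> (q/p * t') y) < e"
      using uc[of t' "q/p * t'" x y] time_close j y(1) by (simp add: dist_commute)
    then show ?thesis using x_red y_red by simp
  qed
  show ?thesis
  proof (rule that)
    show "min k (p/2) > 0" using k x(1) by simp
  qed (rule close)
qed

lemma continuous_on_sdist_Sing: "continuous_on UNIV (\<lambda>z. sdist z (Sing \<phi>))"
  unfolding sdist_def by (cases "Sing \<phi> = {}") (simp_all add: continuous_on_infdist)

lemma sdist_Sing_pos:
  assumes "z \<notin> Sing \<phi>"
  shows "0 < sdist z (Sing \<phi>)"
proof (cases "Sing \<phi> = {}")
  case True
  obtain T where "\<phi> T z \<noteq> z" using nonsingular_moves_forward[OF assms] by blast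
  then have "0 < dist z (\<phi> T z)" by simp
  also have "\<dots> \<le> diameter (UNIV :: 'a set)"
    by (rule diameter_bounded_bound) (auto intro: compact_imp_bounded compact_space)
  finally show ?thesis using True unfolding sdist_def by simp
next
  case False
  then show ?thesis unfolding sdist_def using assms by (simp add: infdist_pos_not_in_closed closed_Sing)
qed

lemma sdist_Sing_bounded_below:
  assumes "compact K" "K \<inter> Sing \<phi> = {}"
  obtains r where "r > 0" "\<And>z. z \<in> K \<Longrightarrow> r \<le> sdist z (Sing \<phi>)"
proof (cases "K = {}")
  case False
  obtain z0 where "z0 \<in> K" "\<forall>z\<in>K. sdist z0 (Sing \<phi>) \<le> sdist z (Sing \<phi>)"
    using continuous_attains_inf[OF assms(1) False] continuous_on_subset[OF continuous_on_sdist_Sing] by blast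
  then show ?thesis using that sdist_Sing_pos assms(2) by blast
qed (use that[of 1] in auto)

lemma no_short_periods_near:
  assumes "w \<notin> Sing \<phi>"
  shows "\<exists>\<rho>>0. \<exists>\<epsilon>>0. \<forall>z u. dist z w < \<rho> \<and> 0 < u \<and> u < \<epsilon> \<longrightarrow> \<phi> u z \<noteq> z"
proof -
  obtain T where T: "T > 0" "\<phi> T w \<noteq> w" using nonsingular_moves_forward[OF assms] by blast
  define d0 where "d0 = dist w (\<phi> T w)"
  have d0: "d0 > 0" using T unfolding d0_def by (simp add: eq_commute)
  obtain k where k: "k > 0" and uc: "\<And>a b x y. \<bar>a\<bar> \<le> T + 1 \<Longrightarrow> \<bar>b\<bar> \<le> T + 1 \<Longrightarrow> \<bar>a - b\<bar> < k \<Longrightarrow>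
      dist x y < k \<Longrightarrow> dist (\<phi> a x) (\<phi> b y) < d0/3"
    using flow_uniformly_continuous[of "d0/3" "T + 1"] d0 by auto
  have "\<phi> u z \<noteq> z" if close: "dist z w < min k (d0/3)" and u: "0 < u" "u < min k 1" for z u
  proof
    assume per: "\<phi> u z = z"
    obtain j t' where j: "T = t' + of_int j * u" "0 \<le> t'" "t' < u" using real_mod_decomp[OF u(1)] .
    have "\<phi> T z = \<phi> t' z" using flow_add_int_period[OF per] j(1) by simp
    moreover have "dist (\<phi> t' z) (\<phi> 0 z) < d0/3" using uc[of t' 0 z z] u j T by auto
    moreover have "dist (\<phi> T z) (\<phi> T w) < d0/3" using uc[of T T z w] close T k by auto
    moreover have "d0 \<le> dist w z + dist z (\<phi> T z) + dist (\<phi> T z) (\<phi> T w)"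
      unfolding d0_def using dist_triangle[of w "\<phi> T w" z] dist_triangle[of z "\<phi> T w" "\<phi> T z"] by linarith
    ultimately show False using close by (simp add: dist_commute)
  qed
  then show ?thesis using k d0 by (intro exI[of _ "min k (d0/3)"] conjI exI[of _ "min k 1"]) auto
qed

lemma no_short_periods_on_compact:
  assumes "compact K" "K \<inter> Sing \<phi> = {}"
  obtains p0 where "p0 > 0" "\<forall>w\<in>K. \<forall>u. 0 < u \<and> u < p0 \<longrightarrow> \<phi> u w \<noteq> w"
proof -
  have "\<forall>w\<in>K. \<exists>\<rho>. \<rho> > 0 \<and> (\<exists>\<epsilon>>0. \<forall>z u. dist z w < \<rho> \<and> 0 < u \<and> u < \<epsilon> \<longrightarrow> \<phi> u z \<noteq> z)"
    using no_short_periods_near assms(2) by blast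
  from bchoice[OF this] obtain R where "\<forall>w\<in>K. R w > 0 \<and>
      (\<exists>\<epsilon>>0. \<forall>z u. dist z w < R w \<and> 0 < u \<and> u < \<epsilon> \<longrightarrow> \<phi> u z \<noteq> z)" ..
  then have "\<forall>w\<in>K. \<exists>\<epsilon>. R w > 0 \<and> \<epsilon> > 0 \<and>
      (\<forall>z u. dist z w < R w \<and> 0 < u \<and> u < \<epsilon> \<longrightarrow> \<phi> u z \<noteq> z)" by blast
  from bchoice[OF this] obtain E where RE: "\<forall>w\<in>K. R w > 0 \<and> E w > 0 \<and>
      (\<forall>z u. dist z w < R w \<and> 0 < u \<and> u < E w \<longrightarrow> \<phi> u z \<noteq> z)" ..
  then have "K \<subseteq> (\<Union>w\<in>K. ball w (R w))" by force
  then obtain C where C: "C \<subseteq> K" "finite C" "K \<subseteq> (\<Union>w\<in>C. ball w (R w))"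
    using compactE_image[OF assms(1), of K "\<lambda>w. ball w (R w)"] by auto
  define p0 where "p0 = Min (insert 1 (E ` C))"
  have "p0 > 0" unfolding p0_def using C RE by (subst Min_gr_iff) auto
  moreover have "\<phi> u w \<noteq> w" if w: "w \<in> K" and u: "0 < u" "u < p0" for w u
  proof -
    obtain c where "c \<in> C" "dist c w < R c" using C w by auto
    then have "dist w c < R c" by (simp add: dist_commute)
    moreover have "u < E c" using \<open>c \<in> C\<close> C(2) u(2) unfolding p0_def by auto
    ultimately show ?thesis using RE C(1) \<open>c \<in> C\<close> u(1) by blast
  qed
  ultimately show ?thesis using that by blast
qed

lemma displacement_bounded_below:
  assumes "compact K" and invariant: "\<And>a w. w \<in> K \<Longrightarrow> \<phi> a w \<in> K"
    and no_short: "\<forall>w\<in>K. \<forall>u. 0 < u \<and> u < p0 \<longrightarrow> \<phi> u w \<noteq> w" and "0 < \<tau>" "\<tau> < p0"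
  obtains \<alpha> where "\<alpha> > 0" "\<And>w e. w \<in> K \<Longrightarrow> \<bar>e\<bar> = \<tau> \<Longrightarrow> \<alpha> \<le> dist w (\<phi> e w)"
proof (cases "K = {}")
  case False
  have "continuous_on K (\<lambda>w. dist w (\<phi> \<tau> w))"
    by (intro continuous_on_dist continuous_on_id continuous_on_flow continuous_on_const)
  then obtain w0 where w0: "w0 \<in> K" "\<forall>w\<in>K. dist w0 (\<phi> \<tau> w0) \<le> dist w (\<phi> \<tau> w)"
    using continuous_attains_inf[OF assms(1) False] by blast
  have "dist w0 (\<phi> \<tau> w0) > 0" using no_short w0 assms(4,5) by (simp add: eq_commute)
  moreover have "dist w0 (\<phi> \<tau> w0) \<le> dist w (\<phi> e w)" if w: "w \<in> K" and e: "\<bar>e\<bar> = \<tau>" for w e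
  proof (cases "e = \<tau>")
    case False
    then have "e = -\<tau>" using e by auto
    have "dist w0 (\<phi> \<tau> w0) \<le> dist (\<phi> (-\<tau>) w) (\<phi> \<tau> (\<phi> (-\<tau>) w))" using w0 invariant w by blast
    then show ?thesis using \<open>e = -\<tau>\<close> by (simp add: dist_commute)
  qed (use w0 w in auto)
  ultimately show ?thesis using that by blast
qed (use that[of 1] in auto)

lemma lin_interp_shadowing:
  assumes "almost_translation s \<tau>" "2 * \<tau> < \<kappa>"
    and uc: "\<forall>a b x y. \<bar>a\<bar> \<le> 1 \<and> \<bar>b\<bar> \<le> 1 \<and> \<bar>a - b\<bar> < \<kappa> \<and> dist x y < \<kappa> \<longrightarrow> dist (\<phi> a x) (\<phi> b y) < e"
    and close: "dist (\<phi> t x) (\<phi> (s t) y) \<le> e"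
  shows "dist (\<phi> t x) (\<phi> (lin_interp s t) y) < 2 * e"
proof -
  interpret almost_translation s \<tau> by fact
  have "\<bar>lin_interp s t - s t\<bar> < 2 * \<tau>" by (rule lin_interp_close)
  then have "dist (\<phi> 0 (\<phi> (s t) y)) (\<phi> (lin_interp s t - s t) (\<phi> (s t) y)) < e"
    using assms(2) tolerance by (intro uc[rule_format]) auto
  then have "dist (\<phi> (s t) y) (\<phi> (lin_interp s t) y) < e" by simp
  then show ?thesis using close dist_triangle[of "\<phi> t x" "\<phi> (lin_interp s t) y" "\<phi> (s t) y"] by linarith
qed

lemma shadowing_almost_translation:
  assumes "compact K" and invariant: "\<And>a w. w \<in> K \<Longrightarrow> \<phi> a w \<in> K"
    and no_short: "\<forall>w\<in>K. \<forall>u. 0 < u \<and> u < p0 \<longrightarrow> \<phi> u w \<noteq> w" and \<tau>: "0 < \<tau>" "\<tau> < p0" "\<tau> \<le> 1"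
  obtains \<delta> where "\<delta> > 0" "\<And>x y s t h. x \<in> K \<Longrightarrow> continuous_on UNIV s \<Longrightarrow>
      \<forall>t. dist (\<phi> t x) (\<phi> (s t) y) \<le> \<delta> \<Longrightarrow> \<bar>h\<bar> \<le> 1 \<Longrightarrow> \<bar>s (t + h) - s t - h\<bar> < \<tau>"
proof -
  obtain \<alpha> where \<alpha>: "\<alpha> > 0" and displaced: "\<And>w e. w \<in> K \<Longrightarrow> \<bar>e\<bar> = \<tau> \<Longrightarrow> \<alpha> \<le> dist w (\<phi> e w)"
    using displacement_bounded_below[OF assms(1) invariant no_short \<tau>(1,2)] by blast
  obtain \<rho> where \<rho>: "\<rho> > 0" and uc: "\<forall>a b x y. \<bar>a\<bar> \<le> 2 \<and> \<bar>b\<bar> \<le> 2 \<and> \<bar>a - b\<bar> < \<rho> \<and> dist x y < \<rho> \<longrightarrow>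
      dist (\<phi> a x) (\<phi> b y) < \<alpha>/2"
    using flow_uniformly_continuous[of "\<alpha>/2" 2] \<alpha> by auto
  have drift: "\<bar>s (t + h) - s t - h\<bar> < \<tau>"
    if x: "x \<in> K" and s: "continuous_on UNIV s" and close: "\<forall>t. dist (\<phi> t x) (\<phi> (s t) y) \<le> min (\<rho>/2) (\<alpha>/2)"
      and h: "\<bar>h\<bar> \<le> 1" for x y s t h
  proof -
    have close_\<rho>: "dist (\<phi> t' x) (\<phi> (s t') y) < \<rho>" and close_\<alpha>: "dist (\<phi> t' x) (\<phi> (s t') y) \<le> \<alpha>/2"
      for t' using close[rule_format, of t'] \<rho> by auto
    define g where "g h' = s (t + h') - s t - h'" for h'
    \<comment> \<open>a drift of size exactly \<open>\<tau>\<close> would move \<open>w = \<phi> (t + h') x \<in> K\<close> by less than \<open>\<alpha>\<close>\<close>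
    have "\<bar>g h'\<bar> \<noteq> \<tau>" if h': "h' \<in> {-1..1}" for h'
    proof
      assume g_eq: "\<bar>g h'\<bar> = \<tau>"
      define w where "w = \<phi> (t + h') x"
      have "\<bar>h' + g h'\<bar> \<le> 2" using h' g_eq \<tau>(3) by auto
      then have "dist (\<phi> (h' + g h') (\<phi> t x)) (\<phi> (h' + g h') (\<phi> (s t) y)) < \<alpha>/2"
        using close_\<rho>[of t] \<rho> by (intro uc[rule_format]) auto
      moreover have "\<phi> (h' + g h') (\<phi> t x) = \<phi> (g h') w" by (simp add: w_def algebra_simps)
      moreover have "\<phi> (h' + g h') (\<phi> (s t) y) = \<phi> (s (t + h')) y" by (simp add: g_def algebra_simps)
      moreover have "dist w (\<phi> (s (t + h')) y) \<le> \<alpha>/2" unfolding w_def by (rule close_\<alpha>)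
      ultimately have "dist w (\<phi> (g h') w) < \<alpha>"
        using dist_triangle[of w "\<phi> (g h') w" "\<phi> (s (t + h')) y"] by (simp add: dist_commute)
      moreover have "\<alpha> \<le> dist w (\<phi> (g h') w)" using displaced invariant x g_eq unfolding w_def by blast
      ultimately show False by simp
    qed
    moreover have "continuous_on {-1..1} g"
      unfolding g_def by (intro continuous_intros continuous_on_compose2[OF s]) auto
    ultimately have "\<bar>g h\<bar> < \<tau>"
      using continuous_abs_less_propagates[of "{-1..1}" g 0 \<tau> h] h \<tau>(1) by (simp add: g_def abs_le_iff)
    then show ?thesis by (simp add: g_def)
  qed
  show ?thesis
  proof (rule that)
    show "min (\<rho>/2) (\<alpha>/2) > 0" using \<rho> \<alpha> by simp
  qed (rule drift)
qed

lemma shadowing_time_shift_small: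
  assumes "compact K" and invariant: "\<And>a w. w \<in> K \<Longrightarrow> \<phi> a w \<in> K"
    and no_short: "\<forall>w\<in>K. \<forall>u. 0 < u \<and> u < p0 \<longrightarrow> \<phi> u w \<noteq> w" and \<tau>: "0 < \<tau>" "\<tau> < p0"
  obtains \<delta> where "\<delta> > 0" "\<And>x v s t0 t. x \<in> K \<Longrightarrow> continuous_on UNIV s \<Longrightarrow>
      \<forall>t. dist (\<phi> t x) (\<phi> (s t) (\<phi> v x)) \<le> \<delta> \<Longrightarrow> \<bar>s t0 - t0 + v\<bar> < \<tau> \<Longrightarrow> \<bar>s t - t + v\<bar> < \<tau>"
proof -
  obtain \<alpha> where \<alpha>: "\<alpha> > 0" and displaced: "\<And>w e. w \<in> K \<Longrightarrow> \<bar>e\<bar> = \<tau> \<Longrightarrow> \<alpha> \<le> dist w (\<phi> e w)"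
    using displacement_bounded_below[OF assms(1) invariant no_short \<tau>] by blast
  have shift: "\<bar>s t - t + v\<bar> < \<tau>"
    if x: "x \<in> K" and s: "continuous_on UNIV s" and close: "\<forall>t. dist (\<phi> t x) (\<phi> (s t) (\<phi> v x)) \<le> \<alpha>/2"
      and t0: "\<bar>s t0 - t0 + v\<bar> < \<tau>" for x v s t0 t
  proof -
    have never: "\<forall>t'\<in>UNIV. \<bar>s t' - t' + v\<bar> \<noteq> \<tau>"
    proof (intro ballI notI)
      fix t' :: real
      assume drift: "\<bar>s t' - t' + v\<bar> = \<tau>"
      have "\<phi> (s t' - t' + v) (\<phi> t' x) = \<phi> (s t') (\<phi> v x)" by (simp add: algebra_simps)
      then have "\<alpha> \<le> dist (\<phi> t' x) (\<phi> (s t') (\<phi> v x))"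
        using displaced[OF invariant[OF x, of t'] drift] by simp
      then show False using close[rule_format, of t'] \<alpha> by linarith
    qed
    have "continuous_on UNIV (\<lambda>t. s t - t + v)" by (intro continuous_intros s)
    from continuous_abs_less_propagates[OF this connected_UNIV UNIV_I t0 never UNIV_I]
    show ?thesis .
  qed
  show ?thesis
  proof (rule that)
    show "\<alpha>/2 > 0" using \<alpha> by simp
  qed (rule shift)
qed

end

locale singular_expansive_flow = compact_flow +
  assumes singular_expansive: "singular_expansive \<phi>"
begin

lemma periodic_orbit_locally_unique:
  assumes x: "x \<notin> Sing \<phi>" "p > 0" "\<phi> p x = x"
  shows "\<exists>\<eta>>0. \<forall>y q. dist y x < \<eta> \<and> \<bar>q - p\<bar> < \<eta> \<and> q > 0 \<and> \<phi> q y = y \<longrightarrow> orbit \<phi> y = orbit \<phi> x"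
proof -
  have "compact (orbit \<phi> x)" unfolding periodic_orbit_eq_segment[OF x(2,3)]
    by (intro compact_continuous_image continuous_on_flow continuous_intros) auto
  moreover have "orbit \<phi> x \<inter> Sing \<phi> = {}" using x(1) unfolding orbit_def flow_seg_def by auto
  ultimately obtain r where r: "r > 0" "\<And>z. z \<in> orbit \<phi> x \<Longrightarrow> r \<le> sdist z (Sing \<phi>)"
    using sdist_Sing_bounded_below by metis
  obtain ds where ds: "ds > 0" and expands: "\<forall>y s. increasing_homeo s \<and>
     (\<forall>t. dist (\<phi> t x) (\<phi> (s t) y) \<le> ds * sdist (\<phi> t x) (Sing \<phi>)) \<longrightarrow>
     (\<exists>t0. \<phi> (s t0) y \<in> flow_seg \<phi> {t0 - 1 .. t0 + 1} x)"
    using singular_expansive[unfolded singular_expansive_def, rule_format, OF zero_less_one] by blast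
  obtain \<eta> where "\<eta> > 0" and close: "\<And>y q t. dist y x < \<eta> \<Longrightarrow> \<bar>q - p\<bar> < \<eta> \<Longrightarrow> q > 0 \<Longrightarrow> \<phi> q y = y \<Longrightarrow>
      dist (\<phi> t x) (\<phi> (q/p * t) y) < ds * r"
    using rescaled_periodic_orbits_close[OF x(2,3), of "ds * r"] ds r by auto
  have "orbit \<phi> y = orbit \<phi> x" if y: "dist y x < \<eta>" "\<bar>q - p\<bar> < \<eta>" "q > 0" "\<phi> q y = y" for y q
  proof -
    have "dist (\<phi> t x) (\<phi> (q/p * t) y) \<le> ds * sdist (\<phi> t x) (Sing \<phi>)" for t
    proof -
      have "r \<le> sdist (\<phi> t x) (Sing \<phi>)" by (rule r(2)) (simp add: orbit_def flow_seg_def)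
      then have "ds * r \<le> ds * sdist (\<phi> t x) (Sing \<phi>)" using ds by simp
      then show ?thesis using close[OF y, of t] by linarith
    qed
    moreover have "increasing_homeo (\<lambda>t. q/p * t)" by (rule increasing_homeo_scale) (use x(2) y(3) in simp)
    ultimately obtain t0 where "\<phi> (q/p * t0) y \<in> flow_seg \<phi> {t0 - 1 .. t0 + 1} x"
      using expands by blast
    then obtain u where "\<phi> (q/p * t0) y = \<phi> u x" unfolding flow_seg_def by blast
    then have "y = \<phi> (u - q/p * t0) x" by (rule flow_eq_imp_on_orbit)
    then show ?thesis by simp
  qed
  then show ?thesis using \<open>\<eta> > 0\<close> by blast
qed

lemma periodic_pairs_locally_one_orbit:
  assumes x: "x \<notin> Sing \<phi>"
  shows "\<exists>N orb. open N \<and> (x, p) \<in> N \<and> (\<forall>(y, q)\<in>N. q > 0 \<and> \<phi> q y = y \<longrightarrow> orbit \<phi> y = orb)"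
proof (cases "p > 0 \<and> \<phi> p x = x")
  case True
  then obtain \<eta> where "\<eta> > 0" and unique:
      "\<forall>y q. dist y x < \<eta> \<and> \<bar>q - p\<bar> < \<eta> \<and> q > 0 \<and> \<phi> q y = y \<longrightarrow> orbit \<phi> y = orbit \<phi> x"
    using periodic_orbit_locally_unique[OF x] by blast
  have "orbit \<phi> y = orbit \<phi> x" if "(y, q) \<in> ball (x, p) \<eta>" "q > 0" "\<phi> q y = y" for y q
  proof -
    have "dist y x < \<eta>" "\<bar>q - p\<bar> < \<eta>"
      using that(1) dist_fst_le[of "(x, p)" "(y, q)"] dist_snd_le[of "(x, p)" "(y, q)"]
      by (auto simp: dist_commute dist_real_def abs_minus_commute)
    then show ?thesis using unique that(2,3) by blast
  qed
  then show ?thesis using \<open>\<eta> > 0\<close> by (intro exI[of _ "ball (x, p) \<eta>"] exI[of _ "orbit \<phi> x"]) auto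
next
  case False
  have "\<exists>N. open N \<and> (x, p) \<in> N \<and> (\<forall>(y, q)\<in>N. \<not> (q > 0 \<and> \<phi> q y = y))"
  proof (cases "p > 0")
    case True
    have "continuous_on UNIV (\<lambda>c::'a \<times> real. \<phi> (snd c) (fst c))"
      by (intro continuous_on_flow continuous_intros)
    then have "open {c::'a \<times> real. \<phi> (snd c) (fst c) \<noteq> fst c}"
      by (intro open_Collect_neq continuous_intros)
    then show ?thesis using False True by (intro exI[of _ "{c. \<phi> (snd c) (fst c) \<noteq> fst c}"]) auto
  next
    case p: False
    obtain \<rho> \<epsilon> where "\<rho> > 0" "\<epsilon> > 0" and short: "\<forall>z u. dist z x < \<rho> \<and> 0 < u \<and> u < \<epsilon> \<longrightarrow> \<phi> u z \<noteq> z"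
      using no_short_periods_near[OF x] by blast
    have "\<not> (q > 0 \<and> \<phi> q y = y)" if "(y, q) \<in> ball (x, p) (min \<rho> \<epsilon>)" for y q
    proof -
      have "dist y x < \<rho>" "\<bar>q - p\<bar> < \<epsilon>"
        using that dist_fst_le[of "(x, p)" "(y, q)"] dist_snd_le[of "(x, p)" "(y, q)"]
        by (auto simp: dist_commute dist_real_def abs_minus_commute)
      then show ?thesis using short p by force
    qed
    then show ?thesis using \<open>\<rho> > 0\<close> \<open>\<epsilon> > 0\<close> by (intro exI[of _ "ball (x, p) (min \<rho> \<epsilon>)"]) auto
  qed
  then show ?thesis by blast
qed

lemma finite_periodic_orbits_through_compact:
  assumes "compact K" "K \<inter> Sing \<phi> = {}"
  shows "finite {orbit \<phi> y | y q. y \<in> K \<and> 0 < q \<and> q \<le> B \<and> \<phi> q y = y}"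
proof -
  have "\<forall>c\<in>K \<times> {0..B}. \<exists>N orb. open N \<and> c \<in> N \<and> (\<forall>(y, q)\<in>N. q > 0 \<and> \<phi> q y = y \<longrightarrow> orbit \<phi> y = orb)"
  proof
    fix c assume "c \<in> K \<times> {0..B}"
    then have "fst c \<notin> Sing \<phi>" using assms(2) by auto
    then show "\<exists>N orb. open N \<and> c \<in> N \<and> (\<forall>(y, q)\<in>N. q > 0 \<and> \<phi> q y = y \<longrightarrow> orbit \<phi> y = orb)"
      using periodic_pairs_locally_one_orbit[of "fst c" "snd c"] by simp
  qed
  from bchoice[OF this] obtain N where "\<forall>c\<in>K \<times> {0..B}. \<exists>orb. open (N c) \<and> c \<in> N c \<and>
      (\<forall>(y, q)\<in>N c. q > 0 \<and> \<phi> q y = y \<longrightarrow> orbit \<phi> y = orb)" ..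
  from bchoice[OF this] obtain orb where NO: "\<forall>c\<in>K \<times> {0..B}. open (N c) \<and> c \<in> N c \<and>
      (\<forall>(y, q)\<in>N c. q > 0 \<and> \<phi> q y = y \<longrightarrow> orbit \<phi> y = orb c)" ..
  have "compact (K \<times> {0..B})" using assms(1) by (intro compact_Times) auto
  moreover have "\<And>c. c \<in> K \<times> {0..B} \<Longrightarrow> open (N c)" using NO by (meson bspec)
  moreover have "K \<times> {0..B} \<subseteq> (\<Union>c\<in>K \<times> {0..B}. N c)" using NO by (meson UN_I subsetI)
  ultimately obtain C where C: "C \<subseteq> K \<times> {0..B}" "finite C" "K \<times> {0..B} \<subseteq> (\<Union>c\<in>C. N c)"
    by (rule compactE_image)
  have "{orbit \<phi> y | y q. y \<in> K \<and> 0 < q \<and> q \<le> B \<and> \<phi> q y = y} \<subseteq> orb ` C"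
  proof clarify
    fix y q assume yq: "y \<in> K" "0 < q" "q \<le> B" "\<phi> q y = y"
    then have "(y, q) \<in> K \<times> {0..B}" by simp
    then obtain c where c: "c \<in> C" "(y, q) \<in> N c" using C(3) by blast
    then have "orbit \<phi> y = orb c" using bspec[OF NO, of c] C(1) yq(2,4) by auto
    then show "orbit \<phi> y \<in> orb ` C" using c(1) by blast
  qed
  then show ?thesis using C(2) finite_subset by blast
qed

lemma countable_periodic_orbits: "countable (periodic_orbits \<phi>)"
proof -
  define S where "S m = {orbit \<phi> y | y q. y \<in> {z. 1 \<le> real m * sdist z (Sing \<phi>)} \<and> 0 < q \<and> q \<le> real m \<and> \<phi> q y = y}"
    for m :: nat
  have fin: "finite (S m)" for m
    unfolding S_def
  proof (rule finite_periodic_orbits_through_compact)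
    have "closed {z. 1 \<le> real m * sdist z (Sing \<phi>)}"
      by (intro closed_Collect_le continuous_intros continuous_on_sdist_Sing)
    then show "compact {z. 1 \<le> real m * sdist z (Sing \<phi>)}"
      using compact_Int_closed[OF compact_space] by simp
    show "{z. 1 \<le> real m * sdist z (Sing \<phi>)} \<inter> Sing \<phi> = {}" by (auto simp: sdist_def)
  qed
  have "periodic_orbits \<phi> \<subseteq> (\<Union>m. S m)"
  proof
    fix ob assume "ob \<in> periodic_orbits \<phi>"
    then obtain x q where x: "ob = orbit \<phi> x" "x \<notin> Sing \<phi>" "q > 0" "\<phi> q x = x"
      unfolding periodic_orbits_def periodic_pt_def by blast
    obtain n where n: "1 < real n * sdist x (Sing \<phi>)" using ex_less_of_nat_mult sdist_Sing_pos[OF x(2)] by blast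
    define m where "m = max n (nat \<lceil>q\<rceil>)"
    have "real n * sdist x (Sing \<phi>) \<le> real m * sdist x (Sing \<phi>)"
      unfolding m_def using sdist_Sing_pos[OF x(2)] by (intro mult_right_mono) auto
    then have "1 \<le> real m * sdist x (Sing \<phi>)" using n by linarith
    moreover have "q \<le> real m" unfolding m_def by linarith
    ultimately show "ob \<in> (\<Union>m. S m)" unfolding S_def using x by blast
  qed
  moreover have "countable (\<Union>m. S m)" by (rule countable_UN[OF countableI_type]) (simp add: countable_finite fin)
  ultimately show ?thesis using countable_subset by blast
qed

lemma finite_periodic_orbits_period_le:
  assumes "dyn_isolated \<phi> (Sing \<phi>)"
  shows "finite {orbit \<phi> x | x. periodic_pt \<phi> x \<and> period \<phi> x \<le> t}"
proof -
  obtain U V where UV: "open V" "Sing \<phi> \<subseteq> V" "V \<subseteq> U" "Sing \<phi> = (\<Inter>t. \<phi> t ` U)"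
    using assms unfolding dyn_isolated_def by blast
  have "compact (UNIV \<inter> - V)" using compact_space UV(1) by (intro compact_Int_closed) auto
  then have K: "compact (- V)" "- V \<inter> Sing \<phi> = {}" using UV(2) by auto
  have "{orbit \<phi> x | x. periodic_pt \<phi> x \<and> period \<phi> x \<le> t} \<subseteq>
        {orbit \<phi> y | y q. y \<in> - V \<and> 0 < q \<and> q \<le> t + 1 \<and> \<phi> q y = y}"
  proof
    fix ob assume "ob \<in> {orbit \<phi> x | x. periodic_pt \<phi> x \<and> period \<phi> x \<le> t}"
    then obtain x where x: "periodic_pt \<phi> x" "period \<phi> x \<le> t" "ob = orbit \<phi> x" by blast
    then have "{u. u > 0 \<and> \<phi> u x = x} \<noteq> {}" "x \<notin> Sing \<phi>" unfolding periodic_pt_def by auto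
    moreover have "Inf {u. u > 0 \<and> \<phi> u x = x} < t + 1" using x(2) unfolding period_def by simp
    ultimately obtain q where q: "q > 0" "\<phi> q x = x" "q < t + 1" using cInf_lessD[of "{u. u > 0 \<and> \<phi> u x = x}"] by blast
    \<comment> \<open>a regular orbit cannot stay in the isolating neighbourhood forever\<close>
    have "\<exists>a. \<phi> a x \<notin> V"
    proof (rule ccontr)
      assume "\<nexists>a. \<phi> a x \<notin> V"
      then have "\<phi> (-\<tau>) x \<in> U" for \<tau> using UV(3) by blast
      then have "x \<in> \<phi> \<tau> ` U" for \<tau> using image_eqI[of x "\<phi> \<tau>" "\<phi> (-\<tau>) x" U] by simp
      then show False using UV(4) \<open>x \<notin> Sing \<phi>\<close> by blast
    qed
    then obtain a where "\<phi> a x \<notin> V" by blast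
    moreover have "\<phi> q (\<phi> a x) = \<phi> a x" using flow_period_shift[OF q(2)] .
    moreover have "ob = orbit \<phi> (\<phi> a x)" using x(3) by simp
    ultimately show "ob \<in> {orbit \<phi> y | y q. y \<in> - V \<and> 0 < q \<and> q \<le> t + 1 \<and> \<phi> q y = y}"
      using q by fastforce
  qed
  then show ?thesis using finite_periodic_orbits_through_compact[OF K] finite_subset by blast
qed

lemma shadowing_in_invariant_compact:
  assumes K: "compact K" "K \<inter> Sing \<phi> = {}" and invariant: "\<And>a w. w \<in> K \<Longrightarrow> \<phi> a w \<in> K"
    and "\<epsilon> > 0"
  obtains \<delta> where "\<delta> > 0" "\<And>x y s. x \<in> K \<Longrightarrow> continuous_on UNIV s \<Longrightarrow> s 0 = 0 \<Longrightarrow>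
      \<forall>t. dist (\<phi> t x) (\<phi> (s t) y) \<le> \<delta> \<Longrightarrow> y \<in> flow_seg \<phi> {-\<epsilon> .. \<epsilon>} x"
proof -
  obtain r where r: "r > 0" "\<And>z. z \<in> K \<Longrightarrow> r \<le> sdist z (Sing \<phi>)"
    using sdist_Sing_bounded_below[OF K] by blast
  obtain p0 where p0: "p0 > 0" and no_short: "\<forall>w\<in>K. \<forall>u. 0 < u \<and> u < p0 \<longrightarrow> \<phi> u w \<noteq> w"
    using no_short_periods_on_compact[OF K] by blast
  define \<tau>0 where "\<tau>0 = min \<epsilon> (p0/2)"
  have \<tau>0: "0 < \<tau>0" "\<tau>0 \<le> \<epsilon>" "\<tau>0 < p0" unfolding \<tau>0_def using \<open>\<epsilon> > 0\<close> p0 by auto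
  obtain ds where ds: "ds > 0" and expands: "\<forall>x y s. increasing_homeo s \<and>
      (\<forall>t. dist (\<phi> t x) (\<phi> (s t) y) \<le> ds * sdist (\<phi> t x) (Sing \<phi>)) \<longrightarrow>
      (\<exists>t0. \<phi> (s t0) y \<in> flow_seg \<phi> {t0 - \<tau>0/4 .. t0 + \<tau>0/4} x)"
    using singular_expansive[unfolded singular_expansive_def, rule_format, of "\<tau>0/4"] \<tau>0 by auto
  obtain \<kappa> where \<kappa>: "\<kappa> > 0" and uc: "\<forall>a b x y. \<bar>a\<bar> \<le> 1 \<and> \<bar>b\<bar> \<le> 1 \<and> \<bar>a - b\<bar> < \<kappa> \<and> dist x y < \<kappa> \<longrightarrow>
      dist (\<phi> a x) (\<phi> b y) < ds * r/2"
    using flow_uniformly_continuous[of "ds * r/2" 1] ds r by auto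
  define \<tau> where "\<tau> = min (1/4) (min (\<tau>0/4) (\<kappa>/3))"
  have \<tau>: "0 < \<tau>" "\<tau> \<le> 1/4" "\<tau> \<le> \<tau>0/4" "2 * \<tau> < \<kappa>" unfolding \<tau>_def using \<tau>0 \<kappa> by auto
  obtain \<delta>1 where "\<delta>1 > 0" and almost: "\<And>x y s t h. x \<in> K \<Longrightarrow> continuous_on UNIV s \<Longrightarrow>
      \<forall>t. dist (\<phi> t x) (\<phi> (s t) y) \<le> \<delta>1 \<Longrightarrow> \<bar>h\<bar> \<le> 1 \<Longrightarrow> \<bar>s (t + h) - s t - h\<bar> < \<tau>"
    using shadowing_almost_translation[OF K(1) invariant no_short, of \<tau>] \<tau> \<tau>0 by auto
  obtain \<delta>2 where "\<delta>2 > 0" and small_shift: "\<And>x v s t0 t. x \<in> K \<Longrightarrow> continuous_on UNIV s \<Longrightarrow>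
      \<forall>t. dist (\<phi> t x) (\<phi> (s t) (\<phi> v x)) \<le> \<delta>2 \<Longrightarrow> \<bar>s t0 - t0 + v\<bar> < \<tau>0 \<Longrightarrow> \<bar>s t - t + v\<bar> < \<tau>0"
    using shadowing_time_shift_small[OF K(1) invariant no_short \<tau>0(1,3)] by blast
  define \<delta> where "\<delta> = min (min \<delta>1 \<delta>2) (ds * r/2)"
  have shadow: "y \<in> flow_seg \<phi> {-\<epsilon> .. \<epsilon>} x"
    if x: "x \<in> K" and s: "continuous_on UNIV s" "s 0 = 0" and close: "\<forall>t. dist (\<phi> t x) (\<phi> (s t) y) \<le> \<delta>"
    for x y s
  proof -
    interpret almost_translation s \<tau>
      using almost[OF x s(1)] close \<tau>(2) by unfold_locales (auto simp: \<delta>_def)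
    have "dist (\<phi> t x) (\<phi> (lin_interp s t) y) \<le> ds * sdist (\<phi> t x) (Sing \<phi>)" for t
    proof -
      have "dist (\<phi> t x) (\<phi> (s t) y) \<le> ds * r/2" using close[rule_format, of t] by (simp add: \<delta>_def)
      then have "dist (\<phi> t x) (\<phi> (lin_interp s t) y) < 2 * (ds * r/2)"
        by (rule lin_interp_shadowing[OF almost_translation_axioms \<tau>(4) uc])
      moreover have "ds * r \<le> ds * sdist (\<phi> t x) (Sing \<phi>)" using r(2)[OF invariant[OF x]] ds by simp
      ultimately show ?thesis by linarith
    qed
    then have "\<exists>t0. \<phi> (lin_interp s t0) y \<in> flow_seg \<phi> {t0 - \<tau>0/4 .. t0 + \<tau>0/4} x"
      using expands increasing_homeo_lin_interp by blast
    then obtain t0 u where u: "\<phi> (lin_interp s t0) y = \<phi> u x" "u \<in> {t0 - \<tau>0/4 .. t0 + \<tau>0/4}"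
      unfolding flow_seg_def by blast
    define v where "v = u - lin_interp s t0"
    have y: "y = \<phi> v x" unfolding v_def using u(1) by (rule flow_eq_imp_on_orbit)
    have "\<bar>s t0 - t0 + v\<bar> < \<tau>0"
      using lin_interp_close[of t0] u(2) \<tau>(3) \<tau>0(1) unfolding v_def atLeastAtMost_iff by linarith
    moreover have "\<forall>t. dist (\<phi> t x) (\<phi> (s t) y) \<le> \<delta>2" using close by (simp add: \<delta>_def)
    ultimately have "\<bar>s 0 - 0 + v\<bar> < \<tau>0" using small_shift[OF x s(1)] unfolding y by blast
    then show ?thesis unfolding y flow_seg_def using s(2) \<tau>0(2) by (intro image_eqI[of _ _ v]) auto
  qed
  show ?thesis
  proof (rule that)
    show "\<delta> > 0" unfolding \<delta>_def using \<open>\<delta>1 > 0\<close> \<open>\<delta>2 > 0\<close> ds r by simp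
  qed (rule shadow)
qed

lemma expansive_if_isolated_singularities:
  assumes "finite (Sing \<phi>)" "\<forall>\<sigma>\<in>Sing \<phi>. \<sigma> isolated_in (UNIV :: 'a set)"
  shows "expansive \<phi>"
proof -
  obtain r where r: "r > 0" "\<forall>\<sigma>\<in>Sing \<phi>. \<forall>z. dist \<sigma> z < r \<longrightarrow> z = \<sigma>"
    using finite_isolated_uniform_radius[OF assms] by blast
  have "open (Sing \<phi>)" unfolding open_dist using r by (metis dist_commute)
  then have "compact (UNIV \<inter> - Sing \<phi>)" using compact_space by (intro compact_Int_closed) auto
  then have K: "compact (- Sing \<phi>)" "- Sing \<phi> \<inter> Sing \<phi> = {}" by auto
  show ?thesis unfolding expansive_def expansive_on_def
  proof (intro allI impI)
    fix \<epsilon> :: real assume "\<epsilon> > 0"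
    obtain \<delta> where \<delta>: "\<delta> > 0" and shadow: "\<And>x y s. x \<in> - Sing \<phi> \<Longrightarrow> continuous_on UNIV s \<Longrightarrow> s 0 = 0 \<Longrightarrow>
        \<forall>t. dist (\<phi> t x) (\<phi> (s t) y) \<le> \<delta> \<Longrightarrow> y \<in> flow_seg \<phi> {-\<epsilon> .. \<epsilon>} x"
      using shadowing_in_invariant_compact[OF K _ \<open>\<epsilon> > 0\<close>] by auto
    have "y \<in> flow_seg \<phi> {-\<epsilon> .. \<epsilon>} x"
      if s: "continuous_on UNIV s" "s 0 = 0" and close: "\<forall>t. dist (\<phi> t x) (\<phi> (s t) y) \<le> min \<delta> (r/2)" for x y s
    proof (cases "x \<in> Sing \<phi>")
      case True
      have "dist x y < r" using close[rule_format, of 0] s(2) r(1) by simp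
      then have "y = x" using r(2) True by blast
      then show ?thesis unfolding flow_seg_def using \<open>\<epsilon> > 0\<close> by (intro image_eqI[of _ _ 0]) auto
    next
      case False
      then show ?thesis using shadow[of x s y] s close by simp
    qed
    then show "\<exists>\<delta>>0. \<forall>x\<in>UNIV. \<forall>y\<in>UNIV. \<forall>s. continuous_on UNIV s \<and> s 0 = 0 \<and>
        (\<forall>t. dist (\<phi> t x) (\<phi> (s t) y) \<le> \<delta>) \<longrightarrow> y \<in> flow_seg \<phi> {-\<epsilon> .. \<epsilon>} x"
      using \<delta> r(1) by (intro exI[of _ "min \<delta> (r/2)"]) auto
  qed
qed

end

theorem mainTheorem9:
  fixes \<phi> :: "real \<Rightarrow> 'a::metric_space \<Rightarrow> 'a"
  assumes "compact (UNIV :: 'a set)"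
    and "is_flow \<phi>"
    and "singular_expansive \<phi>"
  shows "countable (periodic_orbits \<phi>)
    \<and> ((Sing \<phi> = {} \<or> (finite (Sing \<phi>) \<and> (\<forall>\<sigma>\<in>Sing \<phi>. \<sigma> isolated_in (UNIV :: 'a set))))
           \<longrightarrow> expansive \<phi>)
    \<and> (dyn_isolated \<phi> (Sing \<phi>) \<longrightarrow> (\<forall>t>0.
           finite {orbit \<phi> x | x. periodic_pt \<phi> x \<and> period \<phi> x \<le> t}))"
proof -
  interpret singular_expansive_flow \<phi> using assms by unfold_locales
  show ?thesis
    using countable_periodic_orbits expansive_if_isolated_singularities finite_periodic_orbits_period_le
    by auto
qed

end
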